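(* Let $X$ be a Banach space over $\mathbb R$ and let $\sum_n x_n$ be a series in $X$ which is not unconditionally convergent. Let $\mathcal I$ be an ideal on $\mathbb N$ with the Baire property. Then the set $$A(\mathcal I):=\left\{t \in \{0,1\}^{\mathbb N} \colon \sum_n t(n)x_n \text{ is } \mathcal I\text{-convergent}\right\}$$ is meager in $\{0,1\}^{\mathbb N}$.
   Context: $\mathbb N=\{1,2,\dots\}$. An ideal on $\mathbb N$ is a family $\mathcal I\subset\mathcal P(\mathbb N)$ closed under finite unions and subsets, with $\mathbb N\notin\mathcal I$ and containing all finite subsets of $\mathbb N$. Identifying subsets of $\mathbb N$ with their characteristic functions, $\mathcal I$ is regarded as a subset of the Cantor space $\{0,1\}^{\mathbb N}$ (product topology), and "$\mathcal I$ has the Baire property" refers to this subset. A sequence $(y_n)$ in a normed space is $\mathcal I$-convergent to $y$ if $\{n:\|y_n-y\|>\varepsilon\}\in\mathcal I$ for every $\varepsilon>0$; a series $\sum_n y_n$ is $\mathcal I$-convergent if the sequence of its partial sums $(\sum_{i=1}^n y_i)_n$ is $\mathcal I$-convergent to some element. A series $\sum_n x_n$ is unconditionally convergent if $\sum_n x_{p(n)}$ converges for every permutation $p$ of $\mathbb N$. *)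

theory Defs
  imports "HOL-Analysis.Analysis"
begin

text \<open>Natural numbers are indexed from 0 here (a harmless shift of the paper's 1,2,...).
  The Cantor space is the type nat \<Rightarrow> bool with its product topology
  (bool is discrete; Function_Topology provides the product topology on functions).\<close>

definition nowhere_dense :: "'a::topological_space set \<Rightarrow> bool" where
  "nowhere_dense S \<longleftrightarrow> interior (closure S) = {}"

definition meager :: "'a::topological_space set \<Rightarrow> bool" where
  "meager S \<longleftrightarrow> (\<exists>F. countable F \<and> (\<forall>N\<in>F. nowhere_dense N) \<and> S \<subseteq> \<Union>F)"

definition baire_property :: "'a::topological_space set \<Rightarrow> bool" where
  "baire_property S \<longleftrightarrow> (\<exists>U. open U \<and> meager ((S - U) \<union> (U - S)))"

definition ideal_on_nat :: "nat set set \<Rightarrow> bool" where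
  "ideal_on_nat I \<longleftrightarrow>
     (\<forall>A\<in>I. \<forall>B\<in>I. A \<union> B \<in> I) \<and>
     (\<forall>A\<in>I. \<forall>B. B \<subseteq> A \<longrightarrow> B \<in> I) \<and>
     UNIV \<notin> I \<and>
     (\<forall>A. finite A \<longrightarrow> A \<in> I)"

definition ideal_as_cantor :: "nat set set \<Rightarrow> (nat \<Rightarrow> bool) set" where
  "ideal_as_cantor I = (\<lambda>A. (\<lambda>n. n \<in> A)) ` I"

definition I_convergent_to :: "nat set set \<Rightarrow> (nat \<Rightarrow> 'a::real_normed_vector) \<Rightarrow> 'a \<Rightarrow> bool" where
  "I_convergent_to I y L \<longleftrightarrow> (\<forall>\<epsilon>>0. {n. norm (y n - L) > \<epsilon>} \<in> I)"

definition I_convergent_series :: "nat set set \<Rightarrow> (nat \<Rightarrow> 'a::real_normed_vector) \<Rightarrow> bool" where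
  "I_convergent_series I y \<longleftrightarrow> (\<exists>L. I_convergent_to I (\<lambda>n. \<Sum>i\<le>n. y i) L)"

definition unconditionally_convergent :: "(nat \<Rightarrow> 'a::real_normed_vector) \<Rightarrow> bool" where
  "unconditionally_convergent x \<longleftrightarrow> (\<forall>p. bij p \<longrightarrow> summable (\<lambda>n. x (p n)))"

end

theory Submission
  imports Defs
begin

text \<open>An ideal with the Baire property is meager: were it comeager in some cylinder, so would
  be its image under flipping all later coordinates, and a point of both gives two sets of the
  ideal with cofinite union. By Talagrand's characterisation of meager ideals there are
  finite blocks \<open>P k \<subseteq> [k, \<infinity>)\<close> such that each set of the ideal contains only finitely
  many of them. If \<open>\<Sum> t(n) x\<^sub>n\<close> is \<open>\<I>\<close>-convergent, the partial sums far from the limit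
  are indexed by a set of the ideal, so for all large \<open>k, k'\<close> some partial sums indexed in
  \<open>P k\<close> and \<open>P k'\<close> are close. For a fixed threshold this is a nowhere dense condition on
  \<open>t\<close>, since failure of unconditional convergence provides finite sets \<open>F\<close>, arbitrarily far
  out, with \<open>\<parallel>\<Sum>\<^sub>F x\<^sub>i\<parallel> \<ge> \<delta>\<close>, and switching on such an \<open>F\<close> between a block \<open>k\<close> and a later
  block \<open>k'\<close> moves the partial sums apart.\<close>

lemma nowhere_dense_empty [simp]: "nowhere_dense {}"
  by (simp add: nowhere_dense_def)

lemma nowhere_dense_Un:
  assumes "nowhere_dense S" "nowhere_dense T"
  shows "nowhere_dense (S \<union> T)"
  using assms interior_closed_Un_empty_interior[of "closure S" "closure T"]
  by (simp add: nowhere_dense_def closure_Un)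

lemma nowhere_dense_vimage_involution:
  assumes cont: "continuous_on UNIV h" and invol: "\<And>t. h (h t) = t"
    and N: "nowhere_dense N"
  shows "nowhere_dense (h -` N)"
proof -
  let ?V = "interior (closure (h -` N))"
  have closure_vimage: "closure (h -` N) \<subseteq> h -` closure N"
    by (intro closure_minimal vimage_mono closure_subset closed_vimage closed_closure cont)
  have "h -` ?V \<subseteq> closure N"
  proof
    fix y assume "y \<in> h -` ?V"
    then have "h y \<in> h -` closure N"
      using interior_subset closure_vimage by blast
    then show "y \<in> closure N"
      by (simp add: invol)
  qed
  moreover have "open (h -` ?V)"
    using cont by (simp add: open_vimage)
  ultimately have "h -` ?V = {}"
    using N interior_maximal unfolding nowhere_dense_def by blast
  then have "?V = {}"
    using invol by (metis empty_iff equals0I vimageI)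
  then show ?thesis
    by (simp add: nowhere_dense_def)
qed

lemma meager_subset: "meager S \<Longrightarrow> T \<subseteq> S \<Longrightarrow> meager T"
  unfolding meager_def by (meson subset_trans)

lemma meager_Un:
  assumes "meager S" "meager T"
  shows "meager (S \<union> T)"
proof -
  obtain F G where "countable F" "\<forall>N\<in>F. nowhere_dense N" "S \<subseteq> \<Union>F"
    and "countable G" "\<forall>N\<in>G. nowhere_dense N" "T \<subseteq> \<Union>G"
    using assms unfolding meager_def by meson
  then show ?thesis
    unfolding meager_def by (intro exI[of _ "F \<union> G"] conjI) blast+
qed

lemma meager_vimage_involution:
  assumes "continuous_on UNIV h" "\<And>t. h (h t) = t" "meager S"
  shows "meager (h -` S)"
proof -
  obtain F where F: "countable F" "\<forall>N\<in>F. nowhere_dense N" "S \<subseteq> \<Union>F"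
    using assms(3) unfolding meager_def by meson
  have "h -` S \<subseteq> \<Union>((\<lambda>N. h -` N) ` F)"
    using F(3) by auto
  then show ?thesis
    unfolding meager_def using F(1,2) nowhere_dense_vimage_involution[OF assms(1,2)]
    by (intro exI[of _ "(\<lambda>N. h -` N) ` F"] conjI) blast+
qed

lemma meager_incseq:
  assumes "meager S"
  obtains N where "incseq N" "\<And>k. nowhere_dense (N k)" "S \<subseteq> (\<Union>k. N k)"
proof -
  obtain F where F: "countable F" "\<forall>N\<in>F. nowhere_dense N" "S \<subseteq> \<Union>F"
    using assms unfolding meager_def by meson
  define g where "g = from_nat_into (insert {} F)"
  have range_g: "range g = insert {} F"
    unfolding g_def using F(1) by (simp add: range_from_nat_into)
  have g: "nowhere_dense (g j)" for j
  proof -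
    have "g j \<in> insert {} F" using range_g by blast
    then show ?thesis using F(2) by auto
  qed
  define N where "N k = (\<Union>j\<le>k. g j)" for k
  have "incseq N"
    unfolding N_def by (rule monoI) (simp add: SUP_subset_mono)
  moreover have "nowhere_dense (N k)" for k
  proof (induction k)
    case 0
    then show ?case using g by (simp add: N_def)
  next
    case (Suc k)
    then show ?case using g by (simp add: N_def atMost_Suc nowhere_dense_Un)
  qed
  moreover have "S \<subseteq> (\<Union>k. N k)"
  proof
    fix t assume "t \<in> S"
    then have "t \<in> \<Union>F" using F(3) by auto
    then obtain j where "t \<in> g j" using range_g by (metis UnionE insertI2 rangeE)
    then show "t \<in> (\<Union>k. N k)" by (auto simp: N_def)
  qed
  ultimately show thesis by (rule that)
qed

definition cylinder :: "bool list \<Rightarrow> (nat \<Rightarrow> bool) set" where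
  "cylinder s = {t. \<forall>i<length s. t i = s ! i}"

lemma mem_cylinder_append:
  "t \<in> cylinder (s @ u) \<longleftrightarrow> t \<in> cylinder s \<and> (\<forall>i<length u. t (length s + i) = u ! i)"
proof
  assume "t \<in> cylinder (s @ u)"
  then show "t \<in> cylinder s \<and> (\<forall>i<length u. t (length s + i) = u ! i)"
    unfolding cylinder_def by (auto simp: nth_append)
next
  assume t: "t \<in> cylinder s \<and> (\<forall>i<length u. t (length s + i) = u ! i)"
  have "t i = (s @ u) ! i" if "i < length (s @ u)" for i
  proof (cases "i < length s")
    case True
    then show ?thesis using t by (simp add: cylinder_def nth_append)
  next
    case False
    then obtain j where "i = length s + j"
      using le_Suc_ex not_less by blast
    then show ?thesis using t that by (simp add: nth_append)
  qed
  then show "t \<in> cylinder (s @ u)"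
    by (simp add: cylinder_def)
qed

lemma mem_cylinder_map: "t \<in> cylinder (map f [0..<n]) \<longleftrightarrow> (\<forall>i<n. t i = f i)"
  by (simp add: cylinder_def)

lemma cylinder_append_subset: "cylinder (s @ u) \<subseteq> cylinder s"
  by (auto simp: mem_cylinder_append)

lemma cylinder_nonempty: "cylinder s \<noteq> {}"
proof -
  have "(\<lambda>i. if i < length s then s ! i else False) \<in> cylinder s"
    by (simp add: cylinder_def)
  then show ?thesis by blast
qed

lemma open_cylinder: "open (cylinder s)"
proof -
  have "cylinder s = {t. \<forall>i\<in>{..<length s}. t (id i) \<in> {s ! i}}"
    unfolding cylinder_def by auto
  moreover have "open {t::nat \<Rightarrow> bool. \<forall>i\<in>{..<length s}. t (id i) \<in> {s ! i}}"
    by (rule product_topology_basis') (auto intro: open_discrete)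
  ultimately show ?thesis
    by simp
qed

lemma open_contains_cylinder:
  assumes "open U" "t \<in> U"
  obtains n where "cylinder (map t [0..<n]) \<subseteq> U"
proof -
  have "openin (product_topology (\<lambda>i. euclidean) UNIV) U"
    using assms(1) by (simp add: euclidean_product_topology)
  from product_topology_open_contains_basis[OF this assms(2)]
  obtain X where X: "t \<in> (\<Pi>\<^sub>E i\<in>UNIV. X i)" "finite {i. X i \<noteq> UNIV}"
      "(\<Pi>\<^sub>E i\<in>UNIV. X i) \<subseteq> U"
    by auto
  obtain n where n: "\<forall>i\<in>{i. X i \<noteq> UNIV}. i < n"
    using X(2) finite_nat_set_iff_bounded by blast
  have "cylinder (map t [0..<n]) \<subseteq> (\<Pi>\<^sub>E i\<in>UNIV. X i)"
    using X(1) n by (force simp: mem_cylinder_map)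
  then show thesis
    using X(3) that by (meson subset_trans)
qed

lemma nowhere_dense_cantorD:
  assumes "nowhere_dense S"
  obtains u where "cylinder (s @ u) \<inter> S = {}"
proof -
  have "\<not> cylinder s \<subseteq> closure S"
    using assms open_cylinder cylinder_nonempty interior_maximal unfolding nowhere_dense_def
    by (metis subset_empty)
  then obtain t where t: "t \<in> cylinder s" "t \<notin> closure S"
    by auto
  obtain n where n: "cylinder (map t [0..<n]) \<subseteq> - closure S"
    using open_contains_cylinder[of "- closure S" t] t(2) by auto
  define u where "u = map (\<lambda>i. t (length s + i)) [0..<n]"
  have "cylinder (s @ u) \<subseteq> cylinder (map t [0..<n])"
  proof
    fix f assume f: "f \<in> cylinder (s @ u)"
    have "f i = t i" if "i < n" for i
    proof (cases "i < length s")
      case True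
      then show ?thesis using f t(1) by (simp add: mem_cylinder_append cylinder_def nth_append)
    next
      case False
      then obtain j where "i = length s + j"
        using le_Suc_ex not_less by blast
      then show ?thesis using f that by (simp add: mem_cylinder_append u_def)
    qed
    then show "f \<in> cylinder (map t [0..<n])"
      by (simp add: mem_cylinder_map)
  qed
  then have "cylinder (s @ u) \<inter> S = {}"
    using n closure_subset by auto
  then show thesis
    by (rule that)
qed

lemma nowhere_dense_cantorI:
  assumes avoid: "\<And>s. \<exists>u. cylinder (s @ u) \<inter> S = {}"
  shows "nowhere_dense S"
  unfolding nowhere_dense_def
proof (rule ccontr)
  assume "interior (closure S) \<noteq> {}"
  then obtain t where "t \<in> interior (closure S)" by blast
  then obtain n where n: "cylinder (map t [0..<n]) \<subseteq> interior (closure S)"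
    using open_contains_cylinder[OF open_interior] by metis
  obtain u where u: "cylinder (map t [0..<n] @ u) \<inter> S = {}"
    using avoid by blast
  let ?C = "cylinder (map t [0..<n] @ u)"
  have "?C \<subseteq> closure S"
    using n cylinder_append_subset interior_subset by blast
  moreover have "?C \<inter> closure S = {}"
    using u open_Int_closure_eq_empty open_cylinder by blast
  ultimately show False
    using cylinder_nonempty by blast
qed

lemma Hausdorff_space_bool: "Hausdorff_space (euclidean :: bool topology)"
  unfolding Hausdorff_space_def
proof (intro allI impI)
  fix x y :: bool
  show "\<exists>U V. openin euclidean U \<and> openin euclidean V \<and> x \<in> U \<and> y \<in> V \<and> disjnt U V"
    if "x \<in> topspace euclidean \<and> y \<in> topspace euclidean \<and> x \<noteq> y"
    using that by (intro exI[of _ "{x}"] exI[of _ "{y}"]) (simp add: open_discrete)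
qed

lemma locally_compact_regular_space_cantor:
  "locally_compact_space (euclidean :: (nat \<Rightarrow> bool) topology) \<and>
   regular_space (euclidean :: (nat \<Rightarrow> bool) topology)"
proof -
  have "compact_space (euclidean :: bool topology)"
    using compact_space_alt by force
  then have "compact_space (product_topology (\<lambda>i::nat. euclidean :: bool topology) UNIV) \<and>
      Hausdorff_space (product_topology (\<lambda>i::nat. euclidean :: bool topology) UNIV)"
    using Hausdorff_space_bool
    by (simp add: compact_space_product_topology Hausdorff_space_product_topology)
  then have "compact_space (euclidean :: (nat \<Rightarrow> bool) topology) \<and>
      Hausdorff_space (euclidean :: (nat \<Rightarrow> bool) topology)"
    by (simp add: euclidean_product_topology)
  then show ?thesis
    using compact_imp_locally_compact_space locally_compact_Hausdorff_imp_regular_space by blast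
qed

lemma open_not_meager_cantor:
  assumes "open U" "U \<noteq> {}"
  shows "\<not> meager (U :: (nat \<Rightarrow> bool) set)"
proof
  assume "meager U"
  then obtain F where F: "countable F" "\<forall>N\<in>F. nowhere_dense N" "U \<subseteq> \<Union>F"
    unfolding meager_def by meson
  have "euclidean interior_of \<Union>(closure ` F) = {}"
  proof (rule Baire_category_alt)
    show "completely_metrizable_space (euclidean :: (nat \<Rightarrow> bool) topology) \<or>
        locally_compact_space (euclidean :: (nat \<Rightarrow> bool) topology) \<and>
        regular_space (euclidean :: (nat \<Rightarrow> bool) topology)"
      using locally_compact_regular_space_cantor by blast
    show "closedin euclidean T \<and> euclidean interior_of T = {}" if "T \<in> closure ` F" for T
      using that F(2) by (auto simp: nowhere_dense_def closed_closedin[symmetric])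
  qed (use F(1) in simp)
  moreover have "U \<subseteq> \<Union>(closure ` F)"
    using F(3) by (auto intro: closure_subset[THEN subsetD])
  then have "U \<subseteq> interior (\<Union>(closure ` F))"
    using assms(1) by (rule interior_maximal)
  ultimately show False
    using assms(2) by simp
qed

lemma comeager_open_Int_nonempty_cantor:
  fixes C :: "(nat \<Rightarrow> bool) set"
  assumes "open C" "C \<noteq> {}" "meager (C - S)" "meager (C - T)"
  shows "C \<inter> S \<inter> T \<noteq> {}"
proof
  assume "C \<inter> S \<inter> T = {}"
  then have "C \<subseteq> (C - S) \<union> (C - T)"
    by blast
  then have "meager C"
    using meager_subset meager_Un assms(3,4) by metis
  then show False
    using open_not_meager_cantor assms(1,2) by blast
qed

definition flip_from :: "nat \<Rightarrow> (nat \<Rightarrow> bool) \<Rightarrow> nat \<Rightarrow> bool" where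
  "flip_from n t i = (if i < n then t i else \<not> t i)"

lemma flip_from_flip_from [simp]: "flip_from n (flip_from n t) = t"
  by (rule ext) (simp add: flip_from_def)

lemma continuous_on_flip_from: "continuous_on UNIV (flip_from n)"
proof (intro continuous_on_coordinatewise_then_product)
  fix i
  have "continuous_on UNIV ((if i < n then id else Not) \<circ> (\<lambda>t::nat \<Rightarrow> bool. t i))"
    by (intro continuous_on_compose continuous_on_product_coordinates
        Topological_Spaces.continuous_on_discrete)
  then show "continuous_on UNIV (\<lambda>t. flip_from n t i)"
    by (cases "i < n") (simp_all add: comp_def flip_from_def)
qed

lemma flip_from_mem_cylinder:
  "t \<in> cylinder (map t0 [0..<n]) \<Longrightarrow> flip_from n t \<in> cylinder (map t0 [0..<n])"
  by (simp add: mem_cylinder_map flip_from_def)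

lemma meager_ideal_if_baire_property:
  assumes I: "ideal_on_nat I" and bp: "baire_property (ideal_as_cantor I)"
  shows "meager (ideal_as_cantor I)"
proof (rule ccontr)
  let ?J = "ideal_as_cantor I"
  assume nonmeager: "\<not> meager ?J"
  obtain U where U: "open U" "meager ((?J - U) \<union> (U - ?J))"
    using bp unfolding baire_property_def by blast
  have "U \<noteq> {}"
    using U(2) nonmeager by auto
  then obtain t0 where "t0 \<in> U" by blast
  then obtain n where C: "cylinder (map t0 [0..<n]) \<subseteq> U"
    using open_contains_cylinder U(1) by metis
  let ?C = "cylinder (map t0 [0..<n])"
  have "meager (?C - ?J)"
    using meager_subset[OF U(2)] C by blast
  moreover have "?C - flip_from n -` ?J \<subseteq> flip_from n -` (?C - ?J)"
    using flip_from_mem_cylinder by blast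
  ultimately have "meager (?C - flip_from n -` ?J)"
    using meager_subset meager_vimage_involution[OF continuous_on_flip_from] by (metis flip_from_flip_from)
  then obtain t where "t \<in> ?J" "flip_from n t \<in> ?J"
    using comeager_open_Int_nonempty_cantor[OF open_cylinder cylinder_nonempty \<open>meager (?C - ?J)\<close>]
    by blast
  then obtain A B where AB: "A \<in> I" "B \<in> I" "t = (\<lambda>i. i \<in> A)" "flip_from n t = (\<lambda>i. i \<in> B)"
    unfolding ideal_as_cantor_def by blast
  have "i \<in> A \<union> B \<union> {..<n}" for i
    using fun_cong[OF AB(4), of i] by (cases "i < n") (auto simp: flip_from_def AB(3))
  then have "UNIV = A \<union> B \<union> {..<n}"
    by blast
  moreover have "A \<union> B \<union> {..<n} \<in> I"
    using I AB(1,2) unfolding ideal_on_nat_def by (meson finite_lessThan)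
  ultimately show False
    using I unfolding ideal_on_nat_def by simp
qed

lemma nowhere_dense_uniform_extension:
  assumes "nowhere_dense N"
  obtains v where "v \<noteq> []" "\<And>u. length u = n \<Longrightarrow> cylinder (u @ v) \<inter> N = {}"
proof -
  have extend: "\<exists>v. \<forall>u\<in>U. cylinder (u @ v) \<inter> N = {}" if "finite U" for U
    using that
  proof (induction U rule: finite_induct)
    case (insert u0 U)
    then obtain v where v: "\<forall>u\<in>U. cylinder (u @ v) \<inter> N = {}"
      by blast
    obtain w where w: "cylinder (u0 @ v @ w) \<inter> N = {}"
      using nowhere_dense_cantorD[OF assms, of "u0 @ v"] by auto
    have "cylinder (u @ v @ w) \<inter> N = {}" if "u \<in> U" for u
      using v that cylinder_append_subset[of "u @ v" w] by auto
    then show ?case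
      using w by (intro exI[of _ "v @ w"]) auto
  qed simp
  have "finite {u :: bool list. length u = n}"
    using finite_lists_length_eq[of "UNIV :: bool set" n] by simp
  then obtain v where v: "\<forall>u\<in>{u. length u = n}. cylinder (u @ v) \<inter> N = {}"
    using extend by blast
  show thesis
  proof (rule that)
    show "v @ [False] \<noteq> []" by simp
    show "cylinder (u @ v @ [False]) \<inter> N = {}" if "length u = n" for u
      using v that cylinder_append_subset[of "u @ v" "[False]"] by auto
  qed
qed

lemma mono_interval_unique:
  fixes f :: "nat \<Rightarrow> nat"
  assumes "mono f" "i \<in> {f k..<f (Suc k)}" "i \<in> {f k'..<f (Suc k')}"
  shows "k = k'"
proof (rule ccontr)
  have no_overlap: False if "l < l'" "i \<in> {f l..<f (Suc l)}" "i \<in> {f l'..<f (Suc l')}" for l l'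
    using that monoD[OF assms(1), of "Suc l" l'] by auto
  assume "k \<noteq> k'"
  then show False
    using no_overlap assms(2,3) by (cases "k < k'") (auto simp: not_less_iff_gr_or_eq)
qed

lemma meager_escaping_words:
  assumes "meager S"
  obtains ns :: "nat \<Rightarrow> nat" and v :: "nat \<Rightarrow> bool list"
  where "\<And>k. v k \<noteq> []" "\<And>k. ns (Suc k) = ns k + length (v k)"
    "\<And>t. t \<in> S \<Longrightarrow> \<exists>j. \<forall>k\<ge>j. t \<notin> cylinder (map t [0..<ns k] @ v k)"
proof -
  obtain N where N: "incseq N" "\<And>k. nowhere_dense (N k)" "S \<subseteq> (\<Union>k. N k)"
    using meager_incseq[OF assms] by blast
  have "\<forall>k n. \<exists>w. w \<noteq> [] \<and> (\<forall>u. length u = n \<longrightarrow> cylinder (u @ w) \<inter> N k = {})"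
    using nowhere_dense_uniform_extension[OF N(2)] by metis
  then obtain V where V: "\<And>k n. V k n \<noteq> [] \<and> (\<forall>u. length u = n \<longrightarrow> cylinder (u @ V k n) \<inter> N k = {})"
    by metis
  define ns where "ns = rec_nat 0 (\<lambda>k n. n + length (V k n))"
  define v where "v k = V k (ns k)" for k
  show thesis
  proof (rule that)
    show "v k \<noteq> []" for k
      using V by (simp add: v_def)
    show "ns (Suc k) = ns k + length (v k)" for k
      by (simp add: ns_def v_def)
    fix t assume "t \<in> S"
    then obtain j where "t \<in> N j"
      using N(3) by blast
    then have "t \<in> N k" if "j \<le> k" for k
      using N(1) that by (auto dest: monoD)
    moreover have "cylinder (map t [0..<ns k] @ v k) \<inter> N k = {}" for k
      using V by (simp add: v_def)
    ultimately show "\<exists>j. \<forall>k\<ge>j. t \<notin> cylinder (map t [0..<ns k] @ v k)"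
      by blast
  qed
qed

definition word_positions :: "nat \<Rightarrow> bool list \<Rightarrow> nat set" where
  "word_positions n w = {n + i | i. i < length w \<and> w ! i}"

lemma mem_cylinder_Union_word_positions:
  assumes ns_Suc: "\<And>k. ns (Suc k) = ns k + length (v k)" and "k \<in> K"
  defines "B \<equiv> \<Union>k\<in>K. word_positions (ns k) (v k)"
  shows "(\<lambda>i. i \<in> B) \<in> cylinder (map (\<lambda>i. i \<in> B) [0..<ns k] @ v k)"
proof -
  have block: "word_positions (ns k) (v k) \<subseteq> {ns k..<ns (Suc k)}" for k
    by (auto simp: word_positions_def ns_Suc)
  have "mono ns"
    by (simp add: mono_iff_le_Suc ns_Suc)
  have "ns k + i \<in> B \<longleftrightarrow> v k ! i" if "i < length (v k)" for i
  proof
    assume "ns k + i \<in> B"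
    then obtain k' where "k' \<in> K" "ns k + i \<in> word_positions (ns k') (v k')"
      unfolding B_def by blast
    moreover from this have "k' = k"
      using mono_interval_unique[OF \<open>mono ns\<close>] block that ns_Suc
      by (metis atLeastLessThan_iff le_add1 nat_add_left_cancel_less subsetD)
    ultimately show "v k ! i"
      by (auto simp: word_positions_def)
  next
    assume "v k ! i"
    then show "ns k + i \<in> B"
      using that \<open>k \<in> K\<close> unfolding B_def word_positions_def by blast
  qed
  then show ?thesis
    by (simp add: mem_cylinder_append mem_cylinder_map)
qed

text \<open>One direction of Talagrand's characterisation of meager ideals. If infinitely many
  blocks lay in a set of the ideal, the union of those blocks would be a set of the ideal
  reading the escaping word on infinitely many intervals.\<close>

lemma meager_ideal_blocks:
  assumes hereditary: "\<And>A B. A \<in> I \<Longrightarrow> B \<subseteq> A \<Longrightarrow> B \<in> I"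
    and meager: "meager (ideal_as_cantor I)"
  obtains P :: "nat \<Rightarrow> nat set"
  where "\<And>k. finite (P k)" "\<And>k i. i \<in> P k \<Longrightarrow> k \<le> i" "\<And>A. A \<in> I \<Longrightarrow> finite {k. P k \<subseteq> A}"
proof -
  obtain ns v where v: "\<And>k. v k \<noteq> []" and ns_Suc: "\<And>k. ns (Suc k) = ns k + length (v k)"
    and escape: "\<And>t. t \<in> ideal_as_cantor I \<Longrightarrow> \<exists>j. \<forall>k\<ge>j. t \<notin> cylinder (map t [0..<ns k] @ v k)"
    using meager_escaping_words[OF meager] by metis
  have "strict_mono ns"
    using v by (simp add: strict_mono_Suc_iff ns_Suc)
  show thesis
  proof (rule that)
    show "finite (word_positions (ns k) (v k))" for k
      by (auto simp: word_positions_def)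
    show "k \<le> i" if "i \<in> word_positions (ns k) (v k)" for k i
      using that seq_suble[OF \<open>strict_mono ns\<close>, of k] by (auto simp: word_positions_def)
  next
    fix A assume A: "A \<in> I"
    define K where "K = {k. word_positions (ns k) (v k) \<subseteq> A}"
    define B where "B = (\<Union>k\<in>K. word_positions (ns k) (v k))"
    show "finite K"
    proof (rule ccontr)
      assume "infinite K"
      have "B \<in> I"
        using A by (rule hereditary) (auto simp: B_def K_def)
      then obtain j where j: "\<forall>k\<ge>j. (\<lambda>i. i \<in> B) \<notin> cylinder (map (\<lambda>i. i \<in> B) [0..<ns k] @ v k)"
        using escape unfolding ideal_as_cantor_def by blast
      obtain k where "k \<in> K" "j \<le> k"
        using \<open>infinite K\<close> unfolding infinite_nat_iff_unbounded_le by blast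
      then show False
        using j mem_cylinder_Union_word_positions[of ns v, OF ns_Suc \<open>k \<in> K\<close>] unfolding B_def by blast
    qed
  qed
qed

lemma unconditionally_convergent_if_small_tail_sums:
  fixes x :: "nat \<Rightarrow> 'a::banach"
  assumes small: "\<And>e. e > 0 \<Longrightarrow> \<exists>N. \<forall>F. finite F \<and> (\<forall>i\<in>F. N \<le> i) \<longrightarrow> norm (sum x F) < e"
  shows "unconditionally_convergent x"
  unfolding unconditionally_convergent_def
proof (intro allI impI)
  fix p :: "nat \<Rightarrow> nat" assume p: "bij p"
  show "summable (\<lambda>n. x (p n))"
    unfolding summable_Cauchy
  proof (intro allI impI)
    fix e :: real assume "e > 0"
    then obtain N where N: "\<And>F. finite F \<Longrightarrow> (\<forall>i\<in>F. N \<le> i) \<Longrightarrow> norm (sum x F) < e"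
      using small by metis
    have "finite (p -` {..<N})"
      using p by (simp add: bij_is_inj finite_vimageI)
    then obtain M where M: "\<forall>j\<in>p -` {..<N}. j < M"
      by (auto simp: finite_nat_set_iff_bounded)
    have "norm (\<Sum>j\<in>{m..<n}. x (p j)) < e" if "M \<le> m" for m n
    proof -
      have "inj_on p {m..<n}"
        using bij_is_inj[OF p] by (rule inj_on_subset) simp
      then have "(\<Sum>j\<in>{m..<n}. x (p j)) = sum x (p ` {m..<n})"
        by (simp add: sum.reindex)
      moreover have "\<forall>i\<in>p ` {m..<n}. N \<le> i"
        using M that by (metis imageE atLeastLessThan_iff lessThan_iff vimageI leD le_trans not_le)
      ultimately show ?thesis
        using N by simp
    qed
    then show "\<exists>M. \<forall>m\<ge>M. \<forall>n. norm (\<Sum>j\<in>{m..<n}. x (p j)) < e"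
      by blast
  qed
qed

lemma not_unconditionally_convergent_large_tail_sums:
  fixes x :: "nat \<Rightarrow> 'a::banach"
  assumes "\<not> unconditionally_convergent x"
  obtains \<delta> where "\<delta> > 0" "\<And>N. \<exists>F. finite F \<and> (\<forall>i\<in>F. N \<le> i) \<and> \<delta> \<le> norm (sum x F)"
proof -
  obtain \<delta> where "\<delta> > 0" "\<forall>N. \<exists>F. finite F \<and> (\<forall>i\<in>F. N \<le> i) \<and> \<not> norm (sum x F) < \<delta>"
    using assms unconditionally_convergent_if_small_tail_sums by meson
  then show thesis
    using that by (simp add: not_less)
qed

definition selected_sum :: "(nat \<Rightarrow> 'a::real_normed_vector) \<Rightarrow> (nat \<Rightarrow> bool) \<Rightarrow> nat \<Rightarrow> 'a" where
  "selected_sum x t n = (\<Sum>i\<le>n. of_bool (t i) *\<^sub>R x i)"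

lemma selected_sum_diff:
  assumes "a \<le> b" "F \<subseteq> {a<..b}" "\<And>i. i \<in> {a<..b} \<Longrightarrow> t i \<longleftrightarrow> i \<in> F"
  shows "selected_sum x t b - selected_sum x t a = sum x F"
proof -
  have split: "{..b} = {..a} \<union> {a<..b}"
    using assms(1) by auto
  have "selected_sum x t b = selected_sum x t a + (\<Sum>i\<in>{a<..b}. of_bool (t i) *\<^sub>R x i)"
    unfolding selected_sum_def split by (rule sum.union_disjoint) auto
  also have "(\<Sum>i\<in>{a<..b}. of_bool (t i) *\<^sub>R x i) = (\<Sum>i\<in>{a<..b}. if i \<in> F then x i else 0)"
    using assms(3) by (intro sum.cong) auto
  also have "\<dots> = sum x F"
    using assms(2) by (simp add: sum.inter_restrict[symmetric] Int_absorb1)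
  finally show ?thesis
    by simp
qed

definition close_on_blocks ::
    "(nat \<Rightarrow> 'a::real_normed_vector) \<Rightarrow> real \<Rightarrow> (nat \<Rightarrow> nat set) \<Rightarrow> nat \<Rightarrow> (nat \<Rightarrow> bool) set"
  where "close_on_blocks x \<delta> P k0 =
    {t. \<forall>k\<ge>k0. \<forall>k'\<ge>k0. \<exists>a\<in>P k. \<exists>b\<in>P k'. dist (selected_sum x t a) (selected_sum x t b) < \<delta>}"

lemma I_convergent_imp_close_on_blocks:
  assumes blocks: "\<And>A. A \<in> I \<Longrightarrow> finite {k. P k \<subseteq> A}" and "\<delta> > 0"
    and conv: "I_convergent_to I (selected_sum x t) L"
  shows "\<exists>k0. t \<in> close_on_blocks x \<delta> P k0"
proof -
  define Z where "Z = {n. norm (selected_sum x t n - L) > \<delta> / 3}"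
  have "\<delta> / 3 > 0"
    using \<open>\<delta> > 0\<close> by simp
  then have "Z \<in> I"
    using conv unfolding I_convergent_to_def Z_def by meson
  then obtain k0 where k0: "\<And>k. P k \<subseteq> Z \<Longrightarrow> k < k0"
    using blocks finite_nat_set_iff_bounded by (metis mem_Collect_eq)
  have near: "\<exists>a\<in>P k. dist (selected_sum x t a) L \<le> \<delta> / 3" if "k0 \<le> k" for k
  proof -
    have "\<not> P k \<subseteq> Z"
      using k0 that by (meson not_le)
    then obtain a where "a \<in> P k" "a \<notin> Z"
      by auto
    then show ?thesis
      by (auto simp: Z_def dist_norm not_less)
  qed
  have "t \<in> close_on_blocks x \<delta> P k0"
    unfolding close_on_blocks_def
  proof (intro CollectI allI impI)
    fix k k' assume "k0 \<le> k" "k0 \<le> k'"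
    then obtain a b where "a \<in> P k" "b \<in> P k'"
      and "dist (selected_sum x t a) L \<le> \<delta> / 3" "dist (selected_sum x t b) L \<le> \<delta> / 3"
      using near by meson
    moreover have "dist (selected_sum x t a) (selected_sum x t b) \<le>
        dist (selected_sum x t a) L + dist (selected_sum x t b) L"
      by (rule dist_triangle2)
    ultimately have "dist (selected_sum x t a) (selected_sum x t b) < \<delta>"
      using \<open>\<delta> > 0\<close> by linarith
    then show "\<exists>a\<in>P k. \<exists>b\<in>P k'. dist (selected_sum x t a) (selected_sum x t b) < \<delta>"
      using \<open>a \<in> P k\<close> \<open>b \<in> P k'\<close> by auto
  qed
  then show ?thesis ..
qed

lemma blocks_separated_by_large_sum:
  fixes P :: "nat \<Rightarrow> nat set"
  assumes fin: "\<And>k. finite (P k)" and ge: "\<And>k i. i \<in> P k \<Longrightarrow> k \<le> i"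
    and large: "\<And>N. \<exists>F. finite F \<and> (\<forall>i\<in>F. N \<le> i) \<and> \<delta> \<le> norm (sum x F)"
  obtains k k' F M where "l \<le> k" "l \<le> k'" "finite F" "\<delta> \<le> norm (sum x F)"
    "\<And>a b. a \<in> P k \<Longrightarrow> b \<in> P k' \<Longrightarrow> m \<le> a \<and> a < b \<and> b < M \<and> F \<subseteq> {a<..b}"
proof -
  have bounded: "\<exists>M. m < M \<and> (\<forall>i\<in>A. i < M)" if "finite A" for m :: nat and A
    using that finite_nat_set_iff_bounded[of "insert m A"] by auto
  define k where "k = max l m"
  obtain M1 where M1: "m < M1" "\<And>a. a \<in> P k \<Longrightarrow> a < M1"
    using bounded[OF fin] by meson
  obtain F where F: "finite F" "\<And>i. i \<in> F \<Longrightarrow> M1 \<le> i" "\<delta> \<le> norm (sum x F)"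
    using large by meson
  obtain M2 where M2: "M1 < M2" "\<And>i. i \<in> F \<Longrightarrow> i < M2"
    using bounded[OF F(1)] by meson
  define k' where "k' = max l M2"
  obtain M3 where M3: "\<And>b. b \<in> P k' \<Longrightarrow> b < M3"
    using bounded[OF fin] by meson
  show thesis
  proof (rule that)
    show "l \<le> k" "l \<le> k'"
      by (simp_all add: k_def k'_def)
    show "finite F" "\<delta> \<le> norm (sum x F)"
      using F(1,3) .
    fix a b assume ab: "a \<in> P k" "b \<in> P k'"
    have a: "m \<le> a" "a < M1"
      using ge[OF ab(1)] M1(2)[OF ab(1)] by (simp_all add: k_def)
    have b: "M2 \<le> b" "b < M3"
      using ge[OF ab(2)] M3[OF ab(2)] by (simp_all add: k'_def)
    have "F \<subseteq> {a<..b}"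
    proof
      fix i assume "i \<in> F"
      then have "M1 \<le> i" "i < M2"
        using F(2) M2(2) by auto
      then show "i \<in> {a<..b}"
        using a b by auto
    qed
    then show "m \<le> a \<and> a < b \<and> b < M3 \<and> F \<subseteq> {a<..b}"
      using a b M2(1) by simp
  qed
qed

lemma nowhere_dense_close_on_blocks:
  assumes fin: "\<And>k. finite (P k)" and ge: "\<And>k i. i \<in> P k \<Longrightarrow> k \<le> i"
    and large: "\<And>N. \<exists>F. finite F \<and> (\<forall>i\<in>F. N \<le> i) \<and> \<delta> \<le> norm (sum x F)"
  shows "nowhere_dense (close_on_blocks x \<delta> P k0)"
proof (rule nowhere_dense_cantorI)
  fix s :: "bool list"
  define m where "m = length s"
  obtain k k' F M where kk: "k0 \<le> k" "k0 \<le> k'" and F: "finite F" "\<delta> \<le> norm (sum x F)"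
    and ab: "\<And>a b. a \<in> P k \<Longrightarrow> b \<in> P k' \<Longrightarrow> m \<le> a \<and> a < b \<and> b < M \<and> F \<subseteq> {a<..b}"
    using fin ge large by (rule blocks_separated_by_large_sum) auto
  define u where "u = map (\<lambda>i. m + i \<in> F) [0..<M - m]"
  have "t \<notin> close_on_blocks x \<delta> P k0" if t: "t \<in> cylinder (s @ u)" for t
  proof
    assume "t \<in> close_on_blocks x \<delta> P k0"
    then have "\<exists>a\<in>P k. \<exists>b\<in>P k'. dist (selected_sum x t a) (selected_sum x t b) < \<delta>"
      using kk unfolding close_on_blocks_def by simp
    then obtain a b where "a \<in> P k" "b \<in> P k'"
      and close: "dist (selected_sum x t a) (selected_sum x t b) < \<delta>"
      by auto
    then have a: "m \<le> a" "a < b" "b < M" "F \<subseteq> {a<..b}"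
      using ab by auto
    have "t i \<longleftrightarrow> i \<in> F" if "i \<in> {a<..b}" for i
    proof -
      have i: "m \<le> i" "i - m < M - m"
        using that a by auto
      have "\<forall>j<M - m. t (m + j) = (m + j \<in> F)"
        using t by (simp add: mem_cylinder_append u_def m_def)
      from this[rule_format, OF i(2)] show ?thesis
        using i(1) by simp
    qed
    then have "selected_sum x t b - selected_sum x t a = sum x F"
      using a by (intro selected_sum_diff) auto
    then have "dist (selected_sum x t a) (selected_sum x t b) = norm (sum x F)"
      by (metis dist_norm norm_minus_commute)
    then show False
      using close F(2) by simp
  qed
  then show "\<exists>u. cylinder (s @ u) \<inter> close_on_blocks x \<delta> P k0 = {}"
    by (intro exI[of _ u]) auto
qed

theorem theorem3p2:
  fixes x :: "nat \<Rightarrow> 'a::banach" and I :: "nat set set"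
  assumes "\<not> unconditionally_convergent x"
    and "ideal_on_nat I"
    and "baire_property (ideal_as_cantor I)"
  shows "meager {t :: nat \<Rightarrow> bool. I_convergent_series I (\<lambda>n. of_bool (t n) *\<^sub>R x n)}"
proof -
  obtain \<delta> where \<delta>: "\<delta> > 0" "\<And>N. \<exists>F. finite F \<and> (\<forall>i\<in>F. N \<le> i) \<and> \<delta> \<le> norm (sum x F)"
    using not_unconditionally_convergent_large_tail_sums[OF assms(1)] by auto
  have hereditary: "\<And>A B. A \<in> I \<Longrightarrow> B \<subseteq> A \<Longrightarrow> B \<in> I"
    using assms(2) by (auto simp: ideal_on_nat_def)
  obtain P where P: "\<And>k. finite (P k)" "\<And>k i. i \<in> P k \<Longrightarrow> k \<le> i"
      "\<And>A. A \<in> I \<Longrightarrow> finite {k. P k \<subseteq> A}"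
    using hereditary meager_ideal_if_baire_property[OF assms(2,3)]
    by (rule meager_ideal_blocks) auto
  have "{t. I_convergent_series I (\<lambda>n. of_bool (t n) *\<^sub>R x n)} \<subseteq> (\<Union>k0. close_on_blocks x \<delta> P k0)"
  proof
    fix t assume "t \<in> {t. I_convergent_series I (\<lambda>n. of_bool (t n) *\<^sub>R x n)}"
    then obtain L where "I_convergent_to I (selected_sum x t) L"
      unfolding I_convergent_series_def selected_sum_def by auto
    then show "t \<in> (\<Union>k0. close_on_blocks x \<delta> P k0)"
      using I_convergent_imp_close_on_blocks[OF P(3) \<delta>(1)] by auto
  qed
  moreover have "nowhere_dense (close_on_blocks x \<delta> P k0)" for k0
    using P(1,2) \<delta>(2) by (rule nowhere_dense_close_on_blocks)
  ultimately show ?thesis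
    unfolding meager_def by (intro exI[of _ "range (close_on_blocks x \<delta> P)"]) auto
qed

end
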